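(* Let $q$ be a prime power and let $f(T)\in\mathbb{F}_q[T]$ be a monic polynomial of degree $d$ such that $D^2f\neq 0$, $\deg f'\ge 1$, and the polynomials $\widetilde{f}(x,y)-f'(x)$ and $\widetilde{f'}(x,y)$ have no common factor other than possibly a power of $x-y$. Then for all but at most $d^2-2d$ values of $s\in\overline{\mathbb{F}_q}$, there exists $b\in\overline{\mathbb{F}_q}$ such that the polynomial $f(T)+sT+b$ has, over $\overline{\mathbb{F}_q}$, exactly one root of multiplicity $2$ and $d-2$ simple roots (and no other roots).
   Context: $\widetilde{f}(x,y)$ is defined by $f(x)-f(y)=(x-y)\widetilde{f}(x,y)$ (and similarly $\widetilde{f'}$ for the derivative $f'$). The $j$-th Hasse derivative of $f=\sum_i a_iT^i$ is $D^jf=\sum_i\binom{i}{j}a_iT^{i-j}$. *)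

theory Defs
  imports "HOL-Computational_Algebra.Polynomial"
begin

definition hasse_deriv :: "nat \<Rightarrow> 'a::comm_ring_1 poly \<Rightarrow> 'a poly" where
  "hasse_deriv j f = (\<Sum>i\<le>degree f. monom (of_nat (i choose j) * coeff f i) (i - j))"

text \<open>Bivariate polynomials in x,y are represented as 'a poly poly:
  the outer variable is y, the coefficients are polynomials in x.\<close>
definition bvar_x :: "'a::comm_ring_1 poly poly" where
  "bvar_x = [: [:0, 1:] :]"

definition bvar_y :: "'a::comm_ring_1 poly poly" where
  "bvar_y = [: 0, 1 :]"

definition in_x :: "'a::comm_ring_1 poly \<Rightarrow> 'a poly poly" where
  "in_x f = [: f :]"

definition in_y :: "'a::comm_ring_1 poly \<Rightarrow> 'a poly poly" where
  "in_y f = map_poly (\<lambda>c. [:c:]) f"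

text \<open>f~(x,y) defined by f(x) - f(y) = (x - y) f~(x,y) (exact division)\<close>
definition tilde :: "'a::field poly \<Rightarrow> 'a poly poly" where
  "tilde f = (in_x f - in_y f) div (bvar_x - bvar_y)"

end

theory Submission
  imports Defs "Subresultants.Subresultant_Gcd" "HOL-Computational_Algebra.Field_as_Ring"
begin

text \<open>
  Put \<open>A = f~(x,y) - f'(x)\<close> and \<open>B = f'~(x,y)\<close>. The polynomial \<open>g = f + sT + b\<close>
  has a double root at \<open>r\<close> exactly when the line \<open>-sT - b\<close> is tangent to \<open>f\<close> at \<open>r\<close>,
  i.e. \<open>s = -f'(r)\<close> and \<open>b\<close> is determined by \<open>r\<close>. The root is not triple when
  \<open>D\<^sup>2f(r) \<noteq> 0\<close>, and a second multiple root \<open>r' \<noteq> r\<close> means the line is bitangent,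
  which forces \<open>A(r,r') = B(r,r') = 0\<close>. After removing the powers of \<open>x - y\<close> from \<open>A\<close>,
  the hypothesis makes the resultant \<open>R(x)\<close> with respect to \<open>y\<close> nonzero, and its degree is
  at most \<open>(d-1)(d-2)\<close> by the total degree bounds. So every \<open>s = -f'(r)\<close> with \<open>r\<close> not a
  root of \<open>D\<^sup>2f \<cdot> R\<close>, which has degree at most \<open>d\<^sup>2 - 2d\<close>, admits a suitable \<open>b\<close>.
\<close>

section \<open>Resultants over arbitrary fields\<close>

text \<open>
  A generic field is not an instance of \<open>field_gcd\<close>, so \<open>gcd\<close> is not available on its
  (bivariate) polynomials. A type copy of the field is instantiated instead; the resultant
  criteria are proved there and transported back along the isomorphism.
\<close>

typedef 'a field_copy = "UNIV :: 'a set" morphisms rep_fc abs_fc by auto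
setup_lifting type_definition_field_copy

instantiation field_copy :: (field) field
begin
lift_definition zero_field_copy :: "'a field_copy" is 0 .
lift_definition one_field_copy :: "'a field_copy" is 1 .
lift_definition plus_field_copy :: "'a field_copy \<Rightarrow> 'a field_copy \<Rightarrow> 'a field_copy" is "(+)" .
lift_definition minus_field_copy :: "'a field_copy \<Rightarrow> 'a field_copy \<Rightarrow> 'a field_copy" is "(-)" .
lift_definition uminus_field_copy :: "'a field_copy \<Rightarrow> 'a field_copy" is "uminus" .
lift_definition times_field_copy :: "'a field_copy \<Rightarrow> 'a field_copy \<Rightarrow> 'a field_copy" is "(*)" .
lift_definition inverse_field_copy :: "'a field_copy \<Rightarrow> 'a field_copy" is "inverse" .
lift_definition divide_field_copy :: "'a field_copy \<Rightarrow> 'a field_copy \<Rightarrow> 'a field_copy" is "(/)" .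
instance
  by intro_classes (transfer, simp add: ring_distribs divide_inverse mult.assoc add.assoc)+
end

instantiation field_copy :: (field)
  "{unique_euclidean_ring, normalization_euclidean_semiring, normalization_semidom_multiplicative}"
begin
definition [simp]: "normalize_field_copy = (normalize_field :: 'a field_copy \<Rightarrow> _)"
definition [simp]: "unit_factor_field_copy = (unit_factor_field :: 'a field_copy \<Rightarrow> _)"
definition [simp]: "modulo_field_copy = (mod_field :: 'a field_copy \<Rightarrow> _)"
definition [simp]: "euclidean_size_field_copy = (euclidean_size_field :: 'a field_copy \<Rightarrow> _)"
definition [simp]: "division_segment (x :: 'a field_copy) = 1"
instance
  by standard (simp_all add: dvd_field_iff field_split_simps split: if_splits)
end

instantiation field_copy :: (field) euclidean_ring_gcd
begin
definition gcd_field_copy :: "'a field_copy \<Rightarrow> 'a field_copy \<Rightarrow> 'a field_copy" where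
  "gcd_field_copy = Euclidean_Algorithm.gcd"
definition lcm_field_copy :: "'a field_copy \<Rightarrow> 'a field_copy \<Rightarrow> 'a field_copy" where
  "lcm_field_copy = Euclidean_Algorithm.lcm"
definition Gcd_field_copy :: "'a field_copy set \<Rightarrow> 'a field_copy" where
  "Gcd_field_copy = Euclidean_Algorithm.Gcd"
definition Lcm_field_copy :: "'a field_copy set \<Rightarrow> 'a field_copy" where
  "Lcm_field_copy = Euclidean_Algorithm.Lcm"
instance
  by standard (simp_all add: gcd_field_copy_def lcm_field_copy_def Gcd_field_copy_def Lcm_field_copy_def)
end

instance field_copy :: (field) field_gcd ..

lemma inj_comm_ring_hom_abs_fc: "inj_comm_ring_hom (abs_fc :: 'a::field \<Rightarrow> 'a field_copy)"
  by unfold_locales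
    (simp_all add: rep_fc_inject[symmetric] plus_field_copy.rep_eq times_field_copy.rep_eq
      one_field_copy.rep_eq zero_field_copy.rep_eq abs_fc_inverse)

lemma inj_comm_ring_hom_rep_fc: "inj_comm_ring_hom (rep_fc :: 'a::field field_copy \<Rightarrow> 'a)"
  by unfold_locales
    (simp_all add: rep_fc_inject plus_field_copy.rep_eq times_field_copy.rep_eq
      one_field_copy.rep_eq zero_field_copy.rep_eq, metis rep_fc_inject zero_field_copy.rep_eq)

interpretation abs_fc: inj_comm_ring_hom "abs_fc :: 'a::field \<Rightarrow> 'a field_copy"
  by (rule inj_comm_ring_hom_abs_fc)
interpretation abs_fc_poly: map_poly_inj_comm_ring_hom "abs_fc :: 'a::field \<Rightarrow> 'a field_copy"
  by (intro map_poly_inj_comm_ring_hom.intro inj_comm_ring_hom_abs_fc)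
interpretation abs_fc_poly_poly: map_poly_inj_comm_ring_hom "map_poly (abs_fc :: 'a::field \<Rightarrow> _)"
  by (intro map_poly_inj_comm_ring_hom.intro abs_fc_poly.inj_comm_ring_hom_axioms)
interpretation rep_fc_poly: map_poly_inj_comm_ring_hom "rep_fc :: 'a::field field_copy \<Rightarrow> 'a"
  by (intro map_poly_inj_comm_ring_hom.intro inj_comm_ring_hom_rep_fc)
interpretation rep_fc_poly_poly: map_poly_inj_comm_ring_hom "map_poly (rep_fc :: 'a::field field_copy \<Rightarrow> _)"
  by (intro map_poly_inj_comm_ring_hom.intro rep_fc_poly.inj_comm_ring_hom_axioms)

lemma map_poly_poly_rep_abs_fc [simp]:
  "map_poly (map_poly rep_fc) (map_poly (map_poly abs_fc) P) = (P :: 'a::field poly poly)"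
  by (simp add: map_poly_map_poly o_def abs_fc_inverse)

lemma map_poly_poly_abs_rep_fc [simp]:
  "map_poly (map_poly abs_fc) (map_poly (map_poly rep_fc) P) = (P :: 'a::field field_copy poly poly)"
  by (simp add: map_poly_map_poly o_def rep_fc_inverse)

lemma irreducible_map_poly_poly_rep_fc:
  fixes P :: "'a::field field_copy poly poly"
  assumes "irreducible P"
  shows "irreducible (map_poly (map_poly rep_fc) P)"
proof -
  let ?R = "map_poly (map_poly rep_fc) :: 'a field_copy poly poly \<Rightarrow> 'a poly poly"
  let ?A = "map_poly (map_poly abs_fc) :: 'a poly poly \<Rightarrow> 'a field_copy poly poly"
  show ?thesis unfolding irreducible_def
  proof (intro conjI allI impI)
    show "?R P \<noteq> 0" using assms by auto
    show "\<not> is_unit (?R P)"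
      using assms abs_fc_poly_poly.hom_dvd_1[of "?R P"] by (auto simp: irreducible_not_unit)
    fix U V assume "?R P = U * V"
    then have "P = ?A U * ?A V" by (metis abs_fc_poly_poly.hom_mult map_poly_poly_abs_rep_fc)
    then have "is_unit (?A U) \<or> is_unit (?A V)" using assms by (simp add: irreducible_def)
    then show "is_unit U \<or> is_unit V"
      by (metis map_poly_poly_rep_abs_fc rep_fc_poly_poly.hom_dvd_1)
  qed
qed

lemma resultant_neq_0_if_no_common_irreducible:
  fixes A B :: "'a::field poly poly"
  assumes "\<And>H. irreducible H \<Longrightarrow> H dvd A \<Longrightarrow> H dvd B \<Longrightarrow> False"
  shows "resultant A B \<noteq> 0"
proof
  assume "resultant A B = 0"
  let ?R = "map_poly (map_poly rep_fc) :: 'a field_copy poly poly \<Rightarrow> 'a poly poly"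
  let ?A = "map_poly (map_poly abs_fc) :: 'a poly poly \<Rightarrow> 'a field_copy poly poly"
  define G where "G = gcd (?A A) (?A B)"
  have "resultant (?A A) (?A B) = 0"
    using \<open>resultant A B = 0\<close> by (simp add: abs_fc_poly.resultant_hom)
  then have "degree G \<noteq> 0" by (simp add: G_def resultant_0_gcd)
  then have "G \<noteq> 0" by auto
  have "\<not> is_unit G"
  proof
    assume "is_unit G"
    then obtain c where "G = [:c:]" by (elim is_unit_polyE)
    with \<open>degree G \<noteq> 0\<close> show False by simp
  qed
  then obtain H where H: "H dvd G" "prime H" using prime_divisor_exists[OF \<open>G \<noteq> 0\<close>] by blast
  have "?R H dvd ?R (?A A)" "?R H dvd ?R (?A B)"
    using H(1) unfolding G_def by (auto intro: rep_fc_poly_poly.hom_dvd dvd_trans)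
  moreover have "irreducible (?R H)"
    using H(2) by (simp add: irreducible_map_poly_poly_rep_fc prime_elem_imp_irreducible)
  ultimately show False using assms by simp
qed

lemma resultant_eq_0_if_common_root:
  fixes p q :: "'a::field poly"
  assumes "p \<noteq> 0" "poly p z = 0" "poly q z = 0"
  shows "resultant p q = 0"
proof -
  let ?A = "map_poly abs_fc :: 'a poly \<Rightarrow> 'a field_copy poly"
  have "poly (?A p) (abs_fc z) = 0" "poly (?A q) (abs_fc z) = 0"
    using assms by (simp_all add: abs_fc.poly_map_poly)
  then have "[:- abs_fc z, 1:] dvd ?A p" "[:- abs_fc z, 1:] dvd ?A q"
    by (metis poly_eq_0_iff_dvd)+
  then have "[:- abs_fc z, 1:] dvd gcd (?A p) (?A q)" by simp
  moreover have "gcd (?A p) (?A q) \<noteq> 0" using assms(1) by simp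
  ultimately have "degree [:- abs_fc z, 1:] \<le> degree (gcd (?A p) (?A q))"
    by (rule dvd_imp_degree_le)
  then have "degree (gcd (?A p) (?A q)) \<noteq> 0" by simp
  then have "resultant (?A p) (?A q) = 0" by (simp add: resultant_0_gcd)
  then show ?thesis by (simp add: abs_fc.resultant_hom)
qed

section \<open>Hasse derivatives\<close>

lemma coeff_hasse_deriv: "coeff (hasse_deriv j f) k = of_nat ((k + j) choose j) * coeff f (k + j)"
proof -
  have "coeff (hasse_deriv j f) k =
      (\<Sum>i\<le>degree f. if i - j = k then of_nat (i choose j) * coeff f i else 0)"
    by (simp add: hasse_deriv_def coeff_sum coeff_monom)
  also have "\<dots> = (\<Sum>i\<le>degree f. if i = k + j then of_nat (i choose j) * coeff f i else 0)"
    by (rule sum.cong) (auto simp: binomial_eq_0)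
  also have "\<dots> = of_nat ((k + j) choose j) * coeff f (k + j)"
    using coeff_eq_0[of f "k + j"] by (auto simp: sum.delta)
  finally show ?thesis .
qed

lemma degree_hasse_deriv_le: "degree (hasse_deriv j f) \<le> degree f - j"
  by (rule degree_le) (auto simp: coeff_hasse_deriv coeff_eq_0)

lemma hasse_deriv_add: "hasse_deriv j (p + q) = hasse_deriv j p + hasse_deriv j q"
  by (rule poly_eqI) (simp add: coeff_hasse_deriv distrib_left)

lemma hasse_deriv_eq_0: "degree p < j \<Longrightarrow> hasse_deriv j p = 0"
  by (rule poly_eqI) (simp add: coeff_hasse_deriv coeff_eq_0)

lemma (in comm_ring_hom) hasse_deriv_map_poly:
  "hasse_deriv j (map_poly hom f) = map_poly hom (hasse_deriv j f)"
  by (rule poly_eqI) (simp add: coeff_hasse_deriv hom_distribs)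

lemma poly_hasse_deriv: "poly (hasse_deriv j p) r = coeff (p \<circ>\<^sub>p [:r, 1:]) j"
proof -
  have "p \<circ>\<^sub>p [:r, 1:] = (\<Sum>i\<le>degree p. [:coeff p i:] * [:r, 1:] ^ i)"
    by (simp add: pcompose_altdef poly_altdef degree_map_poly coeff_map_poly)
  then have "coeff (p \<circ>\<^sub>p [:r, 1:]) j = (\<Sum>i\<le>degree p. coeff p i * coeff ([:r, 1:] ^ i) j)"
    by (simp add: coeff_sum)
  also have "\<dots> = (\<Sum>i\<le>degree p. of_nat (i choose j) * coeff p i * r ^ (i - j))"
  proof (rule sum.cong)
    fix i
    have "coeff ([:r, 1:] ^ i) j = of_nat (i choose j) * r ^ (i - j)"
    proof (cases "j \<le> i")
      case True
      then show ?thesis using coeff_linear_poly_power[of j i r 1] by simp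
    next
      case False
      then have "degree ([:r, 1:] ^ i) < j" by (simp only: degree_linear_power not_le)
      then have "coeff ([:r, 1:] ^ i) j = 0" by (rule coeff_eq_0)
      with False show ?thesis by (simp add: binomial_eq_0)
    qed
    then show "coeff p i * coeff ([:r, 1:] ^ i) j = of_nat (i choose j) * coeff p i * r ^ (i - j)"
      by simp
  qed simp
  also have "\<dots> = poly (hasse_deriv j p) r"
    by (simp add: hasse_deriv_def poly_sum poly_monom)
  finally show ?thesis by simp
qed

lemma poly_hasse_deriv_eq_0_if_less_order:
  assumes "p \<noteq> 0" "j < order r p"
  shows "poly (hasse_deriv j p) r = 0"
proof -
  define n where "n = order r p"
  obtain q where q: "p = [:- r, 1:] ^ n * q" using order_1 unfolding n_def by (blast elim: dvdE)
  have "[:- r, 1:] \<circ>\<^sub>p [:r, 1:] = [:0, 1:]" by (simp add: pcompose_pCons)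
  then have "p \<circ>\<^sub>p [:r, 1:] = monom 1 n * (q \<circ>\<^sub>p [:r, 1:])"
    unfolding q by (simp add: pcompose_mult pcompose_hom.hom_power monom_altdef)
  then show ?thesis using assms(2) by (simp add: n_def poly_hasse_deriv coeff_monom_mult)
qed

section \<open>Multiple roots\<close>

lemma order_ge_2_if_poly_pderiv_eq_0:
  fixes p :: "'a::idom poly"
  assumes "p \<noteq> 0" "poly p r = 0" "poly (pderiv p) r = 0"
  shows "2 \<le> order r p"
proof -
  obtain q where q: "p = [:- r, 1:] * q" using assms(2) poly_eq_0_iff_dvd by (metis dvdE)
  have "pderiv p = [:- r, 1:] * pderiv q + q" unfolding q
    by (simp add: pderiv_mult pderiv_pCons del: mult_pCons_left)
  then have "poly q r = 0" using assms(3) by simp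
  then obtain k where k: "q = [:- r, 1:] * k" using poly_eq_0_iff_dvd by (metis dvdE)
  have "[:- r, 1:] ^ 2 dvd p" unfolding q k by (metis dvd_triv_left mult.assoc power2_eq_square)
  then show ?thesis using assms(1) order_divides by blast
qed

lemma poly_pderiv_eq_0_if_order_ge_2:
  fixes p :: "'a::idom poly"
  assumes "p \<noteq> 0" "2 \<le> order r p"
  shows "poly p r = 0" "poly (pderiv p) r = 0"
proof -
  have "[:- r, 1:] ^ 2 dvd p" using assms order_divides by blast
  then obtain k where "p = [:- r, 1:] * ([:- r, 1:] * k)"
    by (metis dvdE power2_eq_square mult.assoc)
  then show "poly p r = 0" "poly (pderiv p) r = 0"
    by (simp_all add: pderiv_mult pderiv_pCons del: mult_pCons_left)
qed

lemma order_eq_2_if_poly_hasse_deriv_2_neq_0: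
  fixes p :: "'a::idom poly"
  assumes "p \<noteq> 0" "poly p r = 0" "poly (pderiv p) r = 0" "poly (hasse_deriv 2 p) r \<noteq> 0"
  shows "order r p = 2"
  using order_ge_2_if_poly_pderiv_eq_0[OF assms(1-3)]
    poly_hasse_deriv_eq_0_if_less_order[OF assms(1), of 2 r] assms(4)
  by linarith

lemma size_proots_eq_degree:
  fixes p :: "'a::field poly"
  assumes alg_closed: "\<And>q :: 'a poly. degree q \<ge> 1 \<Longrightarrow> \<exists>z. poly q z = 0"
    and "p \<noteq> 0"
  shows "size (proots p) = degree p"
  using assms(2)
proof (induction "degree p" arbitrary: p rule: less_induct)
  case (less p)
  show ?case
  proof (cases "degree p = 0")
    case True
    then obtain c where "p = [:c:]" by (rule degree_eq_zeroE)
    then show ?thesis using True by simp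
  next
    case False
    then obtain z where "poly p z = 0" using alg_closed by force
    then obtain q where q: "p = [:- z, 1:] * q" using poly_eq_0_iff_dvd by (metis dvdE)
    with less.prems have "q \<noteq> 0" by auto
    moreover have "degree p = Suc (degree q)"
      using \<open>q \<noteq> 0\<close> unfolding q by (subst degree_mult_eq) auto
    ultimately have "size (proots q) = degree q" using less.hyps by simp
    moreover have "proots p = proots [:- z, 1:] + proots q"
      unfolding q by (rule proots_mult) (use \<open>q \<noteq> 0\<close> in auto)
    moreover have "proots [:- z, 1:] = {#z#}" by (metis proots_linear_factor minus_minus)
    ultimately show ?thesis using \<open>degree p = Suc (degree q)\<close> by simp
  qed
qed

lemma sum_order_eq_degree:
  fixes p :: "'a::field poly"
  assumes alg_closed: "\<And>q :: 'a poly. degree q \<ge> 1 \<Longrightarrow> \<exists>z. poly q z = 0"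
    and "p \<noteq> 0"
  shows "(\<Sum>z | poly p z = 0. order z p) = degree p"
proof -
  have "size (proots p) = (\<Sum>z\<in>set_mset (proots p). count (proots p) z)"
    by (rule size_multiset_overloaded_eq)
  then show ?thesis using size_proots_eq_degree[OF assms] assms(2) by simp
qed

definition double_and_simple_roots :: "'a::idom poly \<Rightarrow> nat \<Rightarrow> bool" where
  "double_and_simple_roots g n \<longleftrightarrow>
     (\<exists>r. order r g = 2 \<and> (\<forall>r'. r' \<noteq> r \<longrightarrow> order r' g \<le> 1)) \<and>
     card {r. poly g r = 0 \<and> order r g = 1} = n"

lemma double_and_simple_rootsI:
  fixes g :: "'a::field poly"
  assumes alg_closed: "\<And>q :: 'a poly. degree q \<ge> 1 \<Longrightarrow> \<exists>z. poly q z = 0"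
    and "g \<noteq> 0" "order r g = 2" "\<And>r'. r' \<noteq> r \<Longrightarrow> order r' g \<le> 1"
  shows "double_and_simple_roots g (degree g - 2)"
proof -
  define Z where "Z = {z. poly g z = 0}"
  have "finite Z" using assms(2) by (simp add: Z_def poly_roots_finite)
  have "r \<in> Z" using assms(3) by (simp add: Z_def order_root)
  have simple: "order z g = 1" if "z \<in> Z - {r}" for z
  proof -
    have "order z g \<noteq> 0" using that assms(2) by (simp add: Z_def order_root)
    moreover have "order z g \<le> 1" using that assms(4) by blast
    ultimately show ?thesis by linarith
  qed
  have "degree g = (\<Sum>z\<in>Z. order z g)"
    using sum_order_eq_degree[OF alg_closed assms(2)] by (simp add: Z_def)
  also have "\<dots> = order r g + (\<Sum>z\<in>Z - {r}. order z g)"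
    using \<open>finite Z\<close> \<open>r \<in> Z\<close> by (simp add: sum.remove)
  also have "\<dots> = 2 + card (Z - {r})" using assms(3) simple by simp
  finally have "card (Z - {r}) = degree g - 2" by simp
  moreover have "{z. poly g z = 0 \<and> order z g = 1} = Z - {r}"
    using simple assms(3) by (auto simp: Z_def)
  moreover have "\<exists>r. order r g = 2 \<and> (\<forall>r'. r' \<noteq> r \<longrightarrow> order r' g \<le> 1)"
    using assms(3,4) by blast
  ultimately show ?thesis unfolding double_and_simple_roots_def by simp
qed

text \<open>
  Subtracting from \<open>p\<close> its tangent line at \<open>r\<close> leaves a double root at \<open>r\<close>; any further
  multiple root \<open>r'\<close> would be a second point of tangency of that line.
\<close>

lemma double_and_simple_roots_if_no_bitangent:
  fixes p :: "'a::field poly"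
  assumes alg_closed: "\<And>q :: 'a poly. degree q \<ge> 1 \<Longrightarrow> \<exists>z. poly q z = 0"
    and "degree p \<ge> 2" and "poly (hasse_deriv 2 p) r \<noteq> 0"
    and no_bitangent: "\<And>r'. r' \<noteq> r \<Longrightarrow> poly (pderiv p) r' = poly (pderiv p) r \<Longrightarrow>
        poly p r - poly p r' \<noteq> (r - r') * poly (pderiv p) r"
  shows "double_and_simple_roots (p + [:poly (pderiv p) r * r - poly p r, - poly (pderiv p) r:])
           (degree p - 2)"
proof -
  define l where "l = [:poly (pderiv p) r * r - poly p r, - poly (pderiv p) r:]"
  define g where "g = p + l"
  have "degree l \<le> 1" by (simp add: l_def)
  then have "degree g = degree p" unfolding g_def using assms(2) by (subst degree_add_eq_left) auto
  then have "g \<noteq> 0" using assms(2) by auto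
  have pderiv_g: "pderiv g = pderiv p + [:- poly (pderiv p) r:]"
    by (simp add: g_def l_def pderiv_add pderiv_pCons)
  have "hasse_deriv 2 g = hasse_deriv 2 p"
    using \<open>degree l \<le> 1\<close> by (simp add: g_def hasse_deriv_add hasse_deriv_eq_0)
  then have "poly (hasse_deriv 2 g) r \<noteq> 0" using assms(3) by simp
  moreover have "poly g r = 0" by (simp add: g_def l_def algebra_simps)
  moreover have "poly (pderiv g) r = 0" by (simp add: pderiv_g)
  ultimately have "order r g = 2"
    using \<open>g \<noteq> 0\<close> by (simp add: order_eq_2_if_poly_hasse_deriv_2_neq_0)
  moreover have "order r' g \<le> 1" if "r' \<noteq> r" for r'
  proof (rule ccontr)
    assume "\<not> order r' g \<le> 1"
    then have "poly g r' = 0" "poly (pderiv g) r' = 0"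
      using poly_pderiv_eq_0_if_order_ge_2[OF \<open>g \<noteq> 0\<close>] by simp_all
    have "poly (pderiv p) r' = poly (pderiv p) r"
      using \<open>poly (pderiv g) r' = 0\<close> by (simp add: pderiv_g)
    moreover have "poly p r - poly p r' = (r - r') * poly (pderiv p) r"
      using \<open>poly g r' = 0\<close> by (simp add: g_def l_def algebra_simps)
    ultimately show False using no_bitangent[OF that] by blast
  qed
  ultimately have "double_and_simple_roots g (degree g - 2)"
    using double_and_simple_rootsI[OF alg_closed \<open>g \<noteq> 0\<close>] by blast
  with \<open>degree g = degree p\<close> show ?thesis by (simp only: g_def l_def)
qed

section \<open>Bivariate polynomials\<close>

abbreviation x_minus_y :: "'a::comm_ring_1 poly poly" where
  "x_minus_y \<equiv> bvar_x - bvar_y"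

lemma x_minus_y_eq: "x_minus_y = [:[:0, 1:], -1:]"
  unfolding bvar_x_def bvar_y_def by (rule poly_eqI) (simp add: coeff_pCons split: nat.splits)

lemma poly_poly_eqI: "(\<And>i j. coeff (coeff P j) i = coeff (coeff Q j) i) \<Longrightarrow> P = Q"
  by (intro poly_eqI) auto

lemma coeff_coeff_x_minus_y_mult:
  "coeff (coeff (x_minus_y * Q) j) i =
     (case i of 0 \<Rightarrow> 0 | Suc i' \<Rightarrow> coeff (coeff Q j) i') -
     (case j of 0 \<Rightarrow> 0 | Suc j' \<Rightarrow> coeff (coeff Q j') i)"
proof -
  have "x_minus_y * Q = Polynomial.smult [:0, 1:] Q - pCons 0 Q" by (simp add: x_minus_y_eq algebra_simps)
  then show ?thesis by (cases i; cases j) (simp_all add: coeff_pCons)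
qed

definition total_degree_le :: "'a::zero poly poly \<Rightarrow> nat \<Rightarrow> bool" where
  "total_degree_le P n \<longleftrightarrow> (\<forall>i j. coeff (coeff P j) i \<noteq> 0 \<longrightarrow> i + j \<le> n)"

lemma total_degree_le_mono: "total_degree_le P m \<Longrightarrow> m \<le> n \<Longrightarrow> total_degree_le P n"
  unfolding total_degree_le_def by force

lemma total_degree_le_diff:
  "total_degree_le P n \<Longrightarrow> total_degree_le Q n \<Longrightarrow> total_degree_le (P - Q) n"
  unfolding total_degree_le_def by force

lemma total_degree_le_in_x: "total_degree_le (in_x g) (degree g)"
  unfolding total_degree_le_def in_x_def by (auto simp: coeff_pCons le_degree split: nat.splits)

lemma degree_coeff_le_if_total_degree_le:
  "total_degree_le P n \<Longrightarrow> coeff P k \<noteq> 0 \<Longrightarrow> degree (coeff P k) + k \<le> n"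
  unfolding total_degree_le_def by (metis leading_coeff_0_iff)

lemma degree_le_if_total_degree_le: "total_degree_le P n \<Longrightarrow> degree P \<le> n"
  using degree_coeff_le_if_total_degree_le[of P n "degree P"] by (cases "P = 0") auto

lemma total_degree_le_cancel_x_minus_y:
  assumes "total_degree_le (x_minus_y * Q) (Suc n)"
  shows "total_degree_le Q n"
proof -
  have top: "coeff (coeff (x_minus_y * Q) j) (Suc i) = 0" if "Suc i + j > Suc n" for i j
    using assms that unfolding total_degree_le_def by (meson not_le)
  have "\<forall>i. i + j > n \<longrightarrow> coeff (coeff Q j) i = 0" for j
  proof (induction j)
    case 0
    then show ?case using top[of _ 0] by (simp add: coeff_coeff_x_minus_y_mult)
  next
    case (Suc j)
    show ?case
    proof (intro allI impI)
      fix i assume "i + Suc j > n"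
      then have "coeff (coeff (x_minus_y * Q) (Suc j)) (Suc i) = 0" "coeff (coeff Q j) (Suc i) = 0"
        using top Suc.IH by auto
      then show "coeff (coeff Q (Suc j)) i = 0" by (simp add: coeff_coeff_x_minus_y_mult)
    qed
  qed
  then show ?thesis unfolding total_degree_le_def by (meson not_le)
qed

lemma total_degree_le_cancel_x_minus_y_power:
  "total_degree_le (x_minus_y ^ a * Q) n \<Longrightarrow> total_degree_le Q n"
proof (induction a)
  case (Suc a)
  have "total_degree_le (x_minus_y * (x_minus_y ^ a * Q)) (Suc n)"
    using total_degree_le_mono[OF Suc.prems, of "Suc n"] by (simp add: mult.assoc)
  then show ?case using Suc.IH total_degree_le_cancel_x_minus_y by blast
qed simp

definition diff_quotient :: "'a::comm_ring_1 poly \<Rightarrow> 'a poly poly" where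
  "diff_quotient f = (\<Sum>j<degree f. monom (\<Sum>i<degree f - j. monom (coeff f (i + j + 1)) i) j)"

lemma coeff_coeff_diff_quotient: "coeff (coeff (diff_quotient f) j) i = coeff f (i + j + 1)"
proof -
  have "coeff (coeff (diff_quotient f) j) i =
      (if j < degree f then if i < degree f - j then coeff f (i + j + 1) else 0 else 0)"
    by (simp add: diff_quotient_def coeff_sum coeff_monom sum.delta' cong: if_cong)
  then show ?thesis using coeff_eq_0[of f "i + j + 1"] by auto
qed

lemma x_minus_y_mult_diff_quotient: "x_minus_y * diff_quotient f = in_x f - in_y f"
  by (rule poly_poly_eqI, unfold coeff_coeff_x_minus_y_mult coeff_coeff_diff_quotient)
    (auto simp: in_x_def in_y_def coeff_map_poly coeff_pCons split: nat.splits)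

lemma tilde_eq_diff_quotient: "tilde f = diff_quotient (f :: 'a::field poly)"
proof -
  have "x_minus_y \<noteq> (0 :: 'a poly poly)" by (simp add: x_minus_y_eq)
  then show ?thesis by (simp add: tilde_def flip: x_minus_y_mult_diff_quotient)
qed

lemma x_minus_y_mult_tilde: "x_minus_y * tilde f = in_x f - in_y (f :: 'a::field poly)"
  by (simp add: tilde_eq_diff_quotient x_minus_y_mult_diff_quotient)

lemma coeff_coeff_tilde: "coeff (coeff (tilde f) j) i = coeff (f :: 'a::field poly) (i + j + 1)"
  by (simp add: tilde_eq_diff_quotient coeff_coeff_diff_quotient)

lemma total_degree_le_tilde: "total_degree_le (tilde f) (degree (f :: 'a::field poly) - 1)"
  unfolding total_degree_le_def coeff_coeff_tilde using le_degree by fastforce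

lemma coeff_tilde_degree_minus_1:
  fixes f :: "'a::field poly"
  assumes "degree f \<ge> 1"
  shows "coeff (tilde f) (degree f - 1) = [:lead_coeff f:]"
proof (rule poly_eqI)
  fix i
  show "coeff (coeff (tilde f) (degree f - 1)) i = coeff [:lead_coeff f:] i"
    using assms by (cases i) (simp_all add: coeff_coeff_tilde coeff_eq_0)
qed

lemma degree_tilde:
  fixes f :: "'a::field poly"
  assumes "degree f \<ge> 1"
  shows "degree (tilde f) = degree f - 1"
proof (rule antisym)
  show "degree (tilde f) \<le> degree f - 1"
    by (rule degree_le_if_total_degree_le[OF total_degree_le_tilde])
  have "f \<noteq> 0" using assms by auto
  then show "degree f - 1 \<le> degree (tilde f)"
    using coeff_tilde_degree_minus_1[OF assms] by (intro le_degree) simp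
qed

lemma lead_coeff_tilde:
  fixes f :: "'a::field poly"
  assumes "degree f \<ge> 1"
  shows "lead_coeff (tilde f) = [:lead_coeff f:]"
  using coeff_tilde_degree_minus_1[OF assms] degree_tilde[OF assms] by simp

lemma irreducible_x_minus_y: "irreducible (x_minus_y :: 'a::field poly poly)"
proof (rule irreducibleI)
  show "x_minus_y \<noteq> (0 :: 'a poly poly)" by (simp add: x_minus_y_eq)
  show "\<not> is_unit (x_minus_y :: 'a poly poly)"
  proof
    assume "is_unit (x_minus_y :: 'a poly poly)"
    then obtain c where "(x_minus_y :: 'a poly poly) = [:c:]" by (elim is_unit_polyE)
    then show False by (simp add: x_minus_y_eq)
  qed
  fix P Q :: "'a poly poly"
  assume PQ: "x_minus_y = P * Q"
  then have "P \<noteq> 0" "Q \<noteq> 0" by (auto simp: x_minus_y_eq)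
  then have "degree P + degree Q = degree (P * Q)" by (simp add: degree_mult_eq)
  also have "\<dots> = 1" using PQ by (simp add: x_minus_y_eq flip: PQ)
  finally have deg: "degree P + degree Q = 1" .
  have "lead_coeff P * lead_coeff Q = -1"
    using arg_cong[OF PQ, of lead_coeff] by (simp add: x_minus_y_eq lead_coeff_mult)
  then have "lead_coeff P dvd 1" "lead_coeff Q dvd 1"
    by (metis dvd_minus_iff dvd_triv_left dvd_triv_right)+
  show "is_unit P \<or> is_unit Q"
  proof (cases "degree P = 0")
    case True
    then obtain c where "P = [:c:]" by (rule degree_eq_zeroE)
    then show ?thesis using \<open>lead_coeff P dvd 1\<close> by (simp add: is_unit_const_poly_iff)
  next
    case False
    with deg have "degree Q = 0" by simp
    then obtain c where "Q = [:c:]" by (rule degree_eq_zeroE)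
    then show ?thesis using \<open>lead_coeff Q dvd 1\<close> by (simp add: is_unit_const_poly_iff)
  qed
qed

lemma x_minus_y_dvd_if_irreducible_dvd:
  fixes H :: "'a::field poly poly"
  assumes "irreducible H" "H dvd x_minus_y"
  shows "x_minus_y dvd H"
proof -
  obtain K where K: "x_minus_y = H * K" using assms(2) by (elim dvdE)
  then have "is_unit K" using irreducibleD[OF irreducible_x_minus_y K] assms(1) irreducible_not_unit
    by blast
  then show ?thesis using K by (metis dvd_mult_unit_iff dvd_refl)
qed

lemma x_minus_y_power_decomp:
  fixes P :: "'a::field poly poly"
  assumes "P \<noteq> 0"
  obtains a Q where "P = x_minus_y ^ a * Q" "\<not> x_minus_y dvd Q"
proof -
  have "\<exists>a Q. P = x_minus_y ^ a * Q \<and> \<not> x_minus_y dvd Q"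
    using assms
  proof (induction "degree P" arbitrary: P rule: less_induct)
    case (less P)
    show ?case
    proof (cases "x_minus_y dvd P")
      case False
      then show ?thesis by (intro exI[of _ 0] exI[of _ P]) simp
    next
      case True
      then obtain P1 where P1: "P = x_minus_y * P1" by (elim dvdE)
      with less.prems have "P1 \<noteq> 0" by auto
      then have "degree P = Suc (degree P1)"
        unfolding P1 by (subst degree_mult_eq) (auto simp: x_minus_y_eq)
      then obtain a Q where "P1 = x_minus_y ^ a * Q" "\<not> x_minus_y dvd Q"
        using less.hyps[of P1] \<open>P1 \<noteq> 0\<close> by auto
      then show ?thesis using P1 by (intro exI[of _ "Suc a"] exI[of _ Q]) (simp add: mult.assoc)
    qed
  qed
  then show ?thesis using that by blast
qed

section \<open>A degree bound for resultants\<close>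

lemma degree_det_le:
  fixes M :: "'a::comm_ring_1 poly mat" and u v :: "nat \<Rightarrow> int"
  assumes "M \<in> carrier_mat n n"
    and entry: "\<And>i j. i < n \<Longrightarrow> j < n \<Longrightarrow> M $$ (i, j) \<noteq> 0 \<Longrightarrow>
      int (degree (M $$ (i, j))) \<le> u i + v j"
  shows "degree (det M) \<le> nat (\<Sum>i = 0..<n. u i + v i)"
proof -
  have "degree (signof p * (\<Prod>i = 0..<n. M $$ (i, p i))) \<le> nat (\<Sum>i = 0..<n. u i + v i)"
    if p: "p permutes {0..<n}" for p
  proof (cases "\<exists>i\<in>{0..<n}. M $$ (i, p i) = 0")
    case True
    then show ?thesis by (simp add: prod_zero)
  next
    case False
    have "degree (signof p * (\<Prod>i = 0..<n. M $$ (i, p i))) = degree (\<Prod>i = 0..<n. M $$ (i, p i))"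
      by (simp add: sign_def)
    also have "\<dots> \<le> (\<Sum>i = 0..<n. degree (M $$ (i, p i)))"
      using degree_prod_sum_le[of "{0..<n}" "\<lambda>i. M $$ (i, p i)"] by (simp add: o_def)
    finally have "int (degree (signof p * (\<Prod>i = 0..<n. M $$ (i, p i))))
        \<le> (\<Sum>i = 0..<n. int (degree (M $$ (i, p i))))"
      by (simp flip: of_nat_sum)
    also have "\<dots> \<le> (\<Sum>i = 0..<n. u i + v (p i))"
      using False entry permutes_in_image[OF p] by (intro sum_mono) auto
    also have "\<dots> = (\<Sum>i = 0..<n. u i + v i)"
      using sum.reindex_bij_betw[OF permutes_imp_bij[OF p], of v] by (simp add: sum.distrib)
    finally show ?thesis by (metis nat_int nat_mono)
  qed
  then show ?thesis
    using assms(1) unfolding det_def by (auto intro!: degree_sum_le simp: finite_permutations)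
qed

lemma degree_sylvester_mat_entry_le:
  fixes P Q :: "'a::comm_ring_1 poly poly"
  assumes P: "total_degree_le P k" and Q: "total_degree_le Q l"
    and "i < degree P + degree Q" "j < degree P + degree Q" "sylvester_mat P Q $$ (i, j) \<noteq> 0"
  shows "int (degree (sylvester_mat P Q $$ (i, j))) \<le>
    (if i < degree Q then int k - int (degree P) - int i else int l - int i) + int j"
proof (cases "i < degree Q")
  case True
  with assms(3-5) have "i \<le> j" "j - i \<le> degree P" "coeff P (degree P + i - j) \<noteq> 0"
    and "sylvester_mat P Q $$ (i, j) = coeff P (degree P + i - j)"
    by (auto simp: sylvester_index_mat split: if_splits)
  with degree_coeff_le_if_total_degree_le[OF P] True show ?thesis by force
next
  case False
  with assms(3-5) have "i - degree Q \<le> j" "j \<le> i" "coeff Q (i - j) \<noteq> 0"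
    and "sylvester_mat P Q $$ (i, j) = coeff Q (i - j)"
    by (auto simp: sylvester_index_mat split: if_splits)
  with degree_coeff_le_if_total_degree_le[OF Q] False show ?thesis by force
qed

lemma degree_resultant_le:
  fixes P Q :: "'a::comm_ring_1 poly poly"
  assumes P: "total_degree_le P k" and Q: "total_degree_le Q l"
  shows "degree (resultant P Q) \<le> k * l"
proof -
  define m n where "m = degree P" and "n = degree Q"
  have "m \<le> k" "n \<le> l" using P Q degree_le_if_total_degree_le by (auto simp: m_def n_def)
  define u where "u i = (if i < n then int k - int m - int i else int l - int i)" for i
  have "\<And>i j. i < m + n \<Longrightarrow> j < m + n \<Longrightarrow> sylvester_mat P Q $$ (i, j) \<noteq> 0 \<Longrightarrow>
      int (degree (sylvester_mat P Q $$ (i, j))) \<le> u i + int j"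
    unfolding m_def n_def u_def by (rule degree_sylvester_mat_entry_le[OF P Q])
  then have "degree (resultant P Q) \<le> nat (\<Sum>i = 0..<m + n. u i + int i)"
    unfolding resultant_def
    by (intro degree_det_le[where u = u and v = int]) (auto simp: m_def n_def carrier_matI)
  also have "(\<Sum>i = 0..<m + n. u i + int i) =
      (\<Sum>i = 0..<n. u i + int i) + (\<Sum>i = n..<m + n. u i + int i)"
    by (simp add: sum.atLeastLessThan_concat)
  also have "(\<Sum>i = 0..<n. u i + int i) = (\<Sum>i = 0..<n. int k - int m)"
    by (rule sum.cong) (auto simp: u_def)
  also have "(\<Sum>i = n..<m + n. u i + int i) = (\<Sum>i = n..<m + n. int l)"
    by (rule sum.cong) (auto simp: u_def)
  also have "(\<Sum>i = 0..<n. int k - int m) + (\<Sum>i = n..<m + n. int l) =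
      int n * (int k - int m) + int m * int l"
    by simp
  also have "\<dots> \<le> int k * int l"
  proof -
    have "0 \<le> (int k - int m) * (int l - int n)" using \<open>m \<le> k\<close> \<open>n \<le> l\<close> by simp
    then show ?thesis by (simp add: algebra_simps)
  qed
  finally show ?thesis by (simp add: nat_mult_distrib[symmetric] flip: of_nat_mult)
qed

definition eval2 ::
  "('a::comm_ring_1 \<Rightarrow> 'b::comm_ring_1) \<Rightarrow> 'a poly poly \<Rightarrow> 'b \<Rightarrow> 'b \<Rightarrow> 'b" where
  "eval2 h P x y = poly (map_poly (\<lambda>c. poly (map_poly h c) x) P) y"

lemma comm_ring_hom_poly_map_poly:
  assumes "comm_ring_hom h"
  shows "comm_ring_hom (\<lambda>c. poly (map_poly h c) x)"
proof -
  interpret map_poly_comm_ring_hom h by (rule map_poly_comm_ring_hom.intro, fact)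
  show ?thesis by unfold_locales (simp_all add: hom_distribs)
qed

lemma comm_ring_hom_eval2:
  assumes "comm_ring_hom h"
  shows "comm_ring_hom (\<lambda>P. eval2 h P x y)"
proof -
  interpret map_poly_comm_ring_hom "\<lambda>c. poly (map_poly h c) x"
    by (intro map_poly_comm_ring_hom.intro comm_ring_hom_poly_map_poly assms)
  show ?thesis unfolding eval2_def by unfold_locales (simp_all add: hom_distribs)
qed

context
  fixes h :: "'a::comm_ring_1 \<Rightarrow> 'b::comm_ring_1"
  assumes h: "comm_ring_hom h"
begin

interpretation h: comm_ring_hom h by (rule h)
interpretation eval_x: comm_ring_hom "\<lambda>c. poly (map_poly h c) x" for x
  by (rule comm_ring_hom_poly_map_poly[OF h])
interpretation eval_x_poly: map_poly_comm_ring_hom "\<lambda>c. poly (map_poly h c) x" for x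
  by (intro map_poly_comm_ring_hom.intro eval_x.comm_ring_hom_axioms)

lemma eval2_x_minus_y: "eval2 h x_minus_y x y = x - y"
  by (simp add: eval2_def x_minus_y_eq hom_distribs)

lemma eval2_in_x: "eval2 h (in_x g) x y = poly (map_poly h g) x"
  by (simp add: eval2_def in_x_def hom_distribs)

lemma eval2_in_y: "eval2 h (in_y g) x y = poly (map_poly h g) y"
proof -
  have "(\<lambda>c. poly (map_poly h c) x) \<circ> (\<lambda>c. [:c:]) = h" by (rule ext) (simp add: hom_distribs)
  then show ?thesis by (simp add: eval2_def in_y_def map_poly_map_poly)
qed

end

lemma eval2_tilde:
  fixes g :: "'a::field poly" and h :: "'a \<Rightarrow> 'b::comm_ring_1"
  assumes h: "comm_ring_hom h"
  shows "(x - y) * eval2 h (tilde g) x y = poly (map_poly h g) x - poly (map_poly h g) y"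
proof -
  interpret eval2: comm_ring_hom "\<lambda>P. eval2 h P x y" by (rule comm_ring_hom_eval2[OF h])
  have "(x - y) * eval2 h (tilde g) x y = eval2 h (x_minus_y * tilde g) x y"
    using eval2.hom_mult[of x_minus_y "tilde g"] by (simp add: eval2_x_minus_y[OF h])
  also have "\<dots> = eval2 h (in_x g - in_y g) x y" by (simp add: x_minus_y_mult_tilde)
  also have "\<dots> = poly (map_poly h g) x - poly (map_poly h g) y"
    using eval2.hom_minus[of "in_x g" "in_y g"] by (simp add: eval2_in_x[OF h] eval2_in_y[OF h])
  finally show ?thesis .
qed

lemma poly_resultant_eq_0_if_common_root:
  fixes A B :: "'a::comm_ring_1 poly poly" and h :: "'a \<Rightarrow> 'b::field"
  assumes h: "comm_ring_hom h"
    and lc: "poly (map_poly h (lead_coeff A)) x \<noteq> 0" "poly (map_poly h (lead_coeff B)) x \<noteq> 0"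
    and root: "eval2 h A x y = 0" "eval2 h B x y = 0"
  shows "poly (map_poly h (resultant A B)) x = 0"
proof -
  define \<phi> where "\<phi> = (\<lambda>c. poly (map_poly h c) x)"
  interpret \<phi>: comm_ring_hom \<phi> unfolding \<phi>_def by (rule comm_ring_hom_poly_map_poly[OF h])
  have deg: "degree (map_poly \<phi> A) = degree A" "degree (map_poly \<phi> B) = degree B"
    using lc by (simp_all add: \<phi>_def map_poly_degree_eq)
  have "A \<noteq> 0" using lc(1) by auto
  then have "map_poly \<phi> A \<noteq> 0"
    using lc(1) by (metis \<phi>_def coeff_map_poly \<phi>.hom_zero leading_coeff_0_iff deg(1))
  moreover have "poly (map_poly \<phi> A) y = 0" "poly (map_poly \<phi> B) y = 0"
    using root by (simp_all add: eval2_def \<phi>_def)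
  ultimately have "resultant (map_poly \<phi> A) (map_poly \<phi> B) = 0" by (rule resultant_eq_0_if_common_root)
  then show ?thesis using \<phi>.resultant_map_poly[OF deg] by (simp add: \<phi>_def)
qed

section \<open>Bitangents and the resultant\<close>

lemma resultant_of_x_minus_y_free_part:
  fixes f :: "'a::field poly"
  assumes monic: "lead_coeff f = 1" and deg_f': "degree (pderiv f) \<ge> 1"
    and no_common: "\<And>H :: 'a poly poly. irreducible H \<Longrightarrow>
        H dvd (tilde f - in_x (pderiv f)) \<Longrightarrow> H dvd tilde (pderiv f) \<Longrightarrow> H dvd x_minus_y"
  obtains a A' where "tilde f - in_x (pderiv f) = x_minus_y ^ a * A'"
    and "is_unit (lead_coeff A')"
    and "resultant A' (tilde (pderiv f)) \<noteq> 0"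
    and "degree (resultant A' (tilde (pderiv f))) \<le> (degree f - 1) * (degree f - 2)"
proof -
  define A where "A = tilde f - in_x (pderiv f)"
  define B where "B = tilde (pderiv f)"
  have deg_f: "degree (pderiv f) \<le> degree f - 1" by (rule degree_pderiv_le)
  have A_bound: "total_degree_le A (degree f - 1)"
    unfolding A_def using total_degree_le_mono[OF total_degree_le_in_x deg_f]
    by (intro total_degree_le_diff total_degree_le_tilde)
  have "degree (in_x (pderiv f)) < degree (tilde f)"
    using deg_f deg_f' by (simp add: in_x_def degree_tilde)
  then have "lead_coeff A = lead_coeff (tilde f)"
    unfolding A_def by (metis lead_coeff_add_le degree_minus diff_conv_add_uminus add.commute)
  also have "\<dots> = 1" using deg_f deg_f' monic by (simp add: lead_coeff_tilde)
  finally have "lead_coeff A = 1" .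
  then have "A \<noteq> 0" by auto
  then obtain a A' where AA': "A = x_minus_y ^ a * A'" and not_dvd: "\<not> x_minus_y dvd A'"
    by (rule x_minus_y_power_decomp)
  have "(-1) ^ a * lead_coeff A' = 1"
    using \<open>lead_coeff A = 1\<close> by (simp add: AA' lead_coeff_mult lead_coeff_power x_minus_y_eq)
  then have "is_unit (lead_coeff A')" by (metis dvd_triv_right)
  moreover have "resultant A' B \<noteq> 0"
  proof (rule resultant_neq_0_if_no_common_irreducible)
    fix H assume H: "irreducible H" "H dvd A'" "H dvd B"
    then have "H dvd x_minus_y" using no_common AA' by (simp add: A_def B_def)
    then have "x_minus_y dvd H" using x_minus_y_dvd_if_irreducible_dvd H(1) by blast
    then show False using H(2) not_dvd dvd_trans by blast
  qed
  moreover have "degree (resultant A' B) \<le> (degree f - 1) * (degree f - 2)"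
  proof (rule degree_resultant_le)
    show "total_degree_le A' (degree f - 1)"
      using A_bound AA' total_degree_le_cancel_x_minus_y_power by blast
    show "total_degree_le B (degree f - 2)"
      unfolding B_def using deg_f by (intro total_degree_le_mono[OF total_degree_le_tilde]) linarith
  qed
  ultimately show ?thesis using that AA' by (simp add: A_def B_def)
qed

lemma poly_resultant_eq_0_if_bitangent:
  fixes f :: "'a::field poly" and h :: "'a \<Rightarrow> 'b::field"
  assumes h: "inj_comm_ring_hom h" and deg_f': "degree (pderiv f) \<ge> 1"
    and A': "tilde f - in_x (pderiv f) = x_minus_y ^ a * A'" and lc_A': "is_unit (lead_coeff A')"
    and "x \<noteq> y"
    and same_slope: "poly (map_poly h (pderiv f)) x = poly (map_poly h (pderiv f)) y"
    and tangent: "poly (map_poly h f) x - poly (map_poly h f) y = (x - y) * poly (map_poly h (pderiv f)) x"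
  shows "poly (map_poly h (resultant A' (tilde (pderiv f)))) x = 0"
proof -
  interpret h: inj_comm_ring_hom h by (rule h)
  interpret eval2: comm_ring_hom "\<lambda>P. eval2 h P x y"
    by (rule comm_ring_hom_eval2[OF h.comm_ring_hom_axioms])
  have "x - y \<noteq> 0" using \<open>x \<noteq> y\<close> by simp
  have "(x - y) * eval2 h (tilde f) x y = (x - y) * poly (map_poly h (pderiv f)) x"
    using eval2_tilde[OF h.comm_ring_hom_axioms] tangent by simp
  then have "eval2 h (tilde f - in_x (pderiv f)) x y = 0"
    using \<open>x - y \<noteq> 0\<close> eval2.hom_minus[of "tilde f" "in_x (pderiv f)"]
    by (simp add: eval2_in_x[OF h.comm_ring_hom_axioms])
  then have "(x - y) ^ a * eval2 h A' x y = 0"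
    using eval2.hom_mult[of "x_minus_y ^ a" A'] eval2.hom_power[of x_minus_y a]
    by (simp add: A' eval2_x_minus_y[OF h.comm_ring_hom_axioms])
  then have "eval2 h A' x y = 0" using \<open>x - y \<noteq> 0\<close> by simp
  moreover have "eval2 h (tilde (pderiv f)) x y = 0"
    using eval2_tilde[OF h.comm_ring_hom_axioms, of x y "pderiv f"] same_slope \<open>x - y \<noteq> 0\<close> by simp
  moreover have "poly (map_poly h (lead_coeff A')) x \<noteq> 0"
  proof -
    obtain c where "lead_coeff A' = [:c:]" "c dvd 1" using lc_A' by (elim is_unit_polyE)
    then show ?thesis by (auto simp: hom_distribs)
  qed
  moreover have "poly (map_poly h (lead_coeff (tilde (pderiv f)))) x \<noteq> 0"
    using deg_f' by (auto simp: lead_coeff_tilde hom_distribs)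
  ultimately show ?thesis
    by (intro poly_resultant_eq_0_if_common_root[OF h.comm_ring_hom_axioms])
qed

lemma exceptional_slopes_subset:
  fixes f :: "'a::field poly" and h :: "'a \<Rightarrow> 'b::field"
  assumes h: "inj_comm_ring_hom h"
    and alg_closed: "\<And>q :: 'b poly. degree q \<ge> 1 \<Longrightarrow> \<exists>z. poly q z = 0"
    and deg_f': "degree (pderiv f) \<ge> 1"
    and A': "tilde f - in_x (pderiv f) = x_minus_y ^ a * A'" "is_unit (lead_coeff A')"
  defines "P \<equiv> hasse_deriv 2 f * resultant A' (tilde (pderiv f))"
  shows "{s. \<not> (\<exists>b. double_and_simple_roots (map_poly h f + [:b, s:]) (degree f - 2))}
    \<subseteq> (\<lambda>r. - poly (map_poly h (pderiv f)) r) ` {r. poly (map_poly h P) r = 0}"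
proof
  interpret h: inj_comm_ring_hom h by (rule h)
  interpret h_idom: idom_hom h by (rule idom_hom.intro, rule h.comm_ring_hom_axioms)
  interpret h_poly: map_poly_comm_ring_hom h
    by (rule map_poly_comm_ring_hom.intro, rule h.comm_ring_hom_axioms)
  define p where "p = map_poly h f"
  have pderiv_p: "pderiv p = map_poly h (pderiv f)" by (simp add: p_def h_idom.map_poly_pderiv)
  fix s assume bad: "s \<in> {s. \<not> (\<exists>b. double_and_simple_roots (p + [:b, s:]) (degree f - 2))}"
  have "degree (pderiv p + [:s:]) \<ge> 1"
    using deg_f' by (simp add: pderiv_p degree_add_eq_left)
  then obtain r where "poly (pderiv p + [:s:]) r = 0" using alg_closed by blast
  then have s: "s = - poly (pderiv p) r" by (simp add: add_eq_0_iff)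
  show "s \<in> (\<lambda>r. - poly (map_poly h (pderiv f)) r) ` {r. poly (map_poly h P) r = 0}"
  proof (rule ccontr)
    assume "\<not> ?thesis"
    then have "poly (map_poly h P) r \<noteq> 0" using s pderiv_p by auto
    then have D2: "poly (hasse_deriv 2 p) r \<noteq> 0"
      and R: "poly (map_poly h (resultant A' (tilde (pderiv f)))) r \<noteq> 0"
      by (simp_all add: P_def p_def h.hasse_deriv_map_poly hom_distribs)
    have "degree f \<ge> 2" using deg_f' degree_pderiv_le[of f] by linarith
    have "double_and_simple_roots
        (p + [:poly (pderiv p) r * r - poly p r, - poly (pderiv p) r:]) (degree p - 2)"
    proof (rule double_and_simple_roots_if_no_bitangent[OF alg_closed _ D2])
      show "2 \<le> degree p" using \<open>degree f \<ge> 2\<close> by (simp add: p_def)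
      fix r' assume "r' \<noteq> r" and slope: "poly (pderiv p) r' = poly (pderiv p) r"
      show "poly p r - poly p r' \<noteq> (r - r') * poly (pderiv p) r"
      proof
        assume "poly p r - poly p r' = (r - r') * poly (pderiv p) r"
        from this[unfolded pderiv_p, unfolded p_def] slope[unfolded pderiv_p, symmetric] \<open>r' \<noteq> r\<close>
        have "poly (map_poly h (resultant A' (tilde (pderiv f)))) r = 0"
          by (intro poly_resultant_eq_0_if_bitangent[OF h deg_f' A']) auto
        with R show False ..
      qed
    qed
    then show False using bad s by (auto simp: p_def)
  qed
qed

lemma inj_comm_ring_homI:
  fixes h :: "'a::comm_ring_1 \<Rightarrow> 'b::comm_ring_1"
  assumes "inj h" "\<And>u v. h (u + v) = h u + h v" "\<And>u v. h (u * v) = h u * h v" "h 1 = 1"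
  shows "inj_comm_ring_hom h"
proof -
  have "h 0 = 0" using assms(2)[of 0 0] by simp
  then show ?thesis
    using assms by unfold_locales (auto, metis injD)
qed

lemma card_image_roots_le:
  fixes q :: "'a::idom poly"
  assumes "q \<noteq> 0"
  shows "finite (g ` {r. poly q r = 0})" "card (g ` {r. poly q r = 0}) \<le> degree q"
proof -
  show "finite (g ` {r. poly q r = 0})" using poly_roots_finite[OF assms] by simp
  have "card (g ` {r. poly q r = 0}) \<le> card {r. poly q r = 0}"
    by (rule card_image_le[OF poly_roots_finite[OF assms]])
  also have "\<dots> \<le> degree q" by (rule card_poly_roots_bound[OF assms])
  finally show "card (g ` {r. poly q r = 0}) \<le> degree q" .
qed

theorem mainTheorem4:
  fixes f :: "'a::{field, finite} poly"
    and emb :: "'a \<Rightarrow> 'b::field"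
  assumes emb_inj: "inj emb"
    and emb_add: "\<And>u v. emb (u + v) = emb u + emb v"
    and emb_mult: "\<And>u v. emb (u * v) = emb u * emb v"
    and emb_one: "emb 1 = 1"
    and alg_closed: "\<And>p :: 'b poly. degree p \<ge> 1 \<Longrightarrow> \<exists>z. poly p z = 0"
    and algebraic: "\<And>z :: 'b. \<exists>p :: 'a poly. p \<noteq> 0 \<and> poly (map_poly emb p) z = 0"
    and monic: "lead_coeff f = 1"
    and d_def: "degree f = d"
    and D2: "hasse_deriv 2 f \<noteq> 0"
    and deg_f': "degree (pderiv f) \<ge> 1"
    and no_common: "\<And>h :: 'a poly poly. irreducible h \<Longrightarrow>
        h dvd (tilde f - in_x (pderiv f)) \<Longrightarrow> h dvd tilde (pderiv f) \<Longrightarrow>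
        h dvd (bvar_x - bvar_y)"
  shows "finite {s :: 'b. \<not> (\<exists>b :: 'b.
            let g = map_poly emb f + [: b, s :] in
            (\<exists>r. order r g = 2 \<and> (\<forall>r'. r' \<noteq> r \<longrightarrow> order r' g \<le> 1)) \<and>
            card {r. poly g r = 0 \<and> order r g = 1} = d - 2)}
       \<and> card {s :: 'b. \<not> (\<exists>b :: 'b.
            let g = map_poly emb f + [: b, s :] in
            (\<exists>r. order r g = 2 \<and> (\<forall>r'. r' \<noteq> r \<longrightarrow> order r' g \<le> 1)) \<and>
            card {r. poly g r = 0 \<and> order r g = 1} = d - 2)} \<le> d^2 - 2*d"
proof -
  have emb: "inj_comm_ring_hom emb" using emb_inj emb_add emb_mult emb_one by (rule inj_comm_ring_homI)
  then interpret emb: inj_comm_ring_hom emb .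
  obtain a A' where A': "tilde f - in_x (pderiv f) = x_minus_y ^ a * A'" "is_unit (lead_coeff A')"
    and R: "resultant A' (tilde (pderiv f)) \<noteq> 0"
      "degree (resultant A' (tilde (pderiv f))) \<le> (d - 1) * (d - 2)"
    using resultant_of_x_minus_y_free_part[OF monic deg_f' no_common] d_def by blast
  define P where "P = hasse_deriv 2 f * resultant A' (tilde (pderiv f))"
  have "map_poly emb P \<noteq> 0" using D2 R(1) by (simp add: P_def)
  have "degree P \<le> (d - 2) + (d - 1) * (d - 2)"
    using degree_mult_le[of "hasse_deriv 2 f" "resultant A' (tilde (pderiv f))"]
      degree_hasse_deriv_le[of 2 f] R(2) d_def
    unfolding P_def by linarith
  also have "\<dots> = d\<^sup>2 - 2 * d" by (cases d; cases "d - 1") (simp_all add: power2_eq_square)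
  finally have "degree (map_poly emb P) \<le> d\<^sup>2 - 2 * d" by simp
  have "{s. \<not> (\<exists>b. let g = map_poly emb f + [:b, s:] in
      (\<exists>r. order r g = 2 \<and> (\<forall>r'. r' \<noteq> r \<longrightarrow> order r' g \<le> 1)) \<and>
      card {r. poly g r = 0 \<and> order r g = 1} = d - 2)}
    \<subseteq> (\<lambda>r. - poly (map_poly emb (pderiv f)) r) ` {r. poly (map_poly emb P) r = 0}"
    using exceptional_slopes_subset[OF emb alg_closed deg_f' A']
    by (simp add: P_def d_def double_and_simple_roots_def Let_def)
  moreover note card_image_roots_le[OF \<open>map_poly emb P \<noteq> 0\<close>,
      where g = "\<lambda>r. - poly (map_poly emb (pderiv f)) r"]
  ultimately show ?thesis
    using \<open>degree (map_poly emb P) \<le> _\<close> by (meson card_mono finite_subset order_trans)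
qed

end
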